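(* Let $T$ be a bounded saturation theory, let $P$ and $E$ be finite sets of predicates of $T$, let $e := \bigvee_{e_i\in E} e_i$, and let $\tau_e := \mathit{SDP}_T(P \cup \widetilde{P}, E)$. Then for every $P' \subseteq P \cup \widetilde{P}$ representing a minterm over $P$ (i.e. for every $p\in P$, $p \in P'$ iff $\neg p \notin P'$), $[\tau_e]_{P'} = [\mathcal{F}_P(e)]_{P'}$.
   Context: A predicate is an atomic formula or its negation; a finite set of predicates is identified with the conjunction of its elements. For a set $H$ of predicates, $\widetilde{H} := \{\neg h : h \in H\}$. A minterm over $P$ is a conjunction containing, for each $p \in P$, exactly one of $p$, $\neg p$. $\mathcal{F}_P(e)$ is the disjunction of all minterms $c$ over $P$ such that $\neg c \vee e$ is valid in $T$; it is a Boolean combination of predicates of $P$, and $[\mathcal{F}_P(e)]_{P'}$ denotes its truth value when each $p\in P$ is assigned ${\tt true}$ iff $p\in P'$. The theory $T$ comes with inference rules; a rule instance is written $g \mathrel{:-} g_1,\dots,g_k$, meaning that $g$ (a predicate, or the contradiction symbol $\bot$) can be derived in one step from predicates $g_1,\dots,g_k$. Saturation procedure $\mathrm{Sat}_N(H)$ (finite set $H$, integer $N\ge 0$): (1) $W := H$. (2) Repeat $N$ times: $W' := W$; for every predicate $g \notin W'$ for which there is a rule instance $g \mathrel{:-} g_1,\dots,g_k$ with all $g_j \in W'$, add $g$ to $W$. (3) Return UNSATISFIABLE if there is a rule instance $\bot \mathrel{:-} g_1,\dots,g_k$ with all $g_j\in W$, else SATISFIABLE. $T$ is a bounded saturation theory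 if there is a function $d_T$ on finite sets of predicates such that for every $N \ge d_T(H)$, $\mathrm{Sat}_N(H)$ returns UNSATISFIABLE iff $H$ is unsatisfiable in $T$. For a finite set $S$, $D_T(S) := \max\{d_T(S') : S' \subseteq S\}$. $\mathit{SDP}_T(G,E)$: introduce a Boolean variable $b_g$ for each $g\in G$ (the set $B_G$); let $N := D_T(G\cup\widetilde{E})$. (1) $W := G \cup \widetilde{E}$; $\tau_{(g,0)} := b_g$ for $g\in G$; $\tau_{(\neg e_i,0)} := {\tt true}$ for $e_i\in E$. (2) For $i=1,\dots,N$: $W' := W$; $S(g):=\emptyset$ for every $g$; for every $g\in W'$ add $\tau_{(g,i-1)}$ to $S(g)$; for every predicate $g$ and every rule instance $g \mathrel{:-} g_1,\dots,g_k$ with all $g_m\in W'$, add $\bigwedge_m \tau_{(g_m,i-1)}$ to $S(g)$ and add $g$ to $W$; then for $g\in W$ set $\tau_{(g,i)} := \bigvee_{d\in S(g)} d$ and $\tau_{(g,\top)} := \tau_{(g,i)}$. (3) $\tau_e := \bigvee$ of $\bigwedge_m \tau_{(g_m,\top)}$ over all rule instances $\bot \mathrel{:-} g_1,\dots,g_k$ with all $g_m\in W$ (empty disjunction is ${\tt false}$). (4) Return $\tau_e$. For $G'\subseteq G$, $[\tau]_{G'}$ is the value of $\tau$ with each $b_g$ replaced by ${\tt true}$ if $g\in G'$ and ${\tt false}$ otherwise. *)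

theory Defs
  imports Main
begin

datatype 'a pred = Pos 'a | Neg 'a

fun negp :: "'a pred \<Rightarrow> 'a pred" where
  "negp (Pos a) = Neg a"
| "negp (Neg a) = Pos a"

text \<open>The theory T is given semantically by the set Mods of atom valuations
  induced by its models (together with variable assignments), and syntactically
  by a set of rule instances (conclusion, premises); conclusion None is bottom.\<close>
type_synonym 'a rules = "('a pred option \<times> 'a pred list) set"

fun sat_pred :: "('a \<Rightarrow> bool) \<Rightarrow> 'a pred \<Rightarrow> bool" where
  "sat_pred M (Pos a) = M a"
| "sat_pred M (Neg a) = (\<not> M a)"

definition satisfiable :: "('a \<Rightarrow> bool) set \<Rightarrow> 'a pred set \<Rightarrow> bool" where
  "satisfiable Mods H \<longleftrightarrow> (\<exists>M\<in>Mods. \<forall>h\<in>H. sat_pred M h)"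

fun satW :: "'a rules \<Rightarrow> 'a pred set \<Rightarrow> nat \<Rightarrow> 'a pred set" where
  "satW R W0 0 = W0"
| "satW R W0 (Suc i) = satW R W0 i \<union>
     {g. \<exists>gs. (Some g, gs) \<in> R \<and> set gs \<subseteq> satW R W0 i}"

definition Sat_unsat :: "'a rules \<Rightarrow> nat \<Rightarrow> 'a pred set \<Rightarrow> bool" where
  "Sat_unsat R N H \<longleftrightarrow> (\<exists>gs. (None, gs) \<in> R \<and> set gs \<subseteq> satW R H N)"

definition bounded_saturation ::
  "('a \<Rightarrow> bool) set \<Rightarrow> 'a rules \<Rightarrow> ('a pred set \<Rightarrow> nat) \<Rightarrow> bool" where
  "bounded_saturation Mods R d \<longleftrightarrow>
     (\<forall>H N. finite H \<longrightarrow> d H \<le> N \<longrightarrow> (Sat_unsat R N H \<longleftrightarrow> \<not> satisfiable Mods H))"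

definition DT :: "('a pred set \<Rightarrow> nat) \<Rightarrow> 'a pred set \<Rightarrow> nat" where
  "DT d S = Max (d ` Pow S)"

text \<open>Value of tau_(g,i) under the assignment b_g := (g \<in> G').
  Initial W is G \<union> ~E; tau_(g,0) = b_g for g \<in> G, and true for g = \<not>e_i
  (the later assignment in step (1) takes precedence); for g \<notin> W the value is false.\<close>
fun sdp_val :: "'a rules \<Rightarrow> 'a pred set \<Rightarrow> 'a pred set \<Rightarrow> nat \<Rightarrow> 'a pred
                 \<Rightarrow> 'a pred set \<Rightarrow> bool" where
  "sdp_val R G E 0 g G' = (if g \<in> negp ` E then True else (g \<in> G \<and> g \<in> G'))"
| "sdp_val R G E (Suc i) g G' =
     ((g \<in> satW R (G \<union> negp ` E) i \<and> sdp_val R G E i g G') \<or>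
      (\<exists>gs. (Some g, gs) \<in> R \<and> set gs \<subseteq> satW R (G \<union> negp ` E) i \<and>
            (\<forall>h\<in>set gs. sdp_val R G E i h G')))"

text \<open>[SDP_T(G,E)]_{G'}, with N = D_T(G \<union> ~E) and tau_(g,top) = tau_(g,N).\<close>
definition SDP_val :: "'a rules \<Rightarrow> ('a pred set \<Rightarrow> nat) \<Rightarrow> 'a pred set \<Rightarrow> 'a pred set
                        \<Rightarrow> 'a pred set \<Rightarrow> bool" where
  "SDP_val R d G E G' =
     (let N = DT d (G \<union> negp ` E) in
      \<exists>gs. (None, gs) \<in> R \<and> set gs \<subseteq> satW R (G \<union> negp ` E) N \<and>
           (\<forall>h\<in>set gs. sdp_val R G E N h G'))"

definition is_minterm :: "'a pred set \<Rightarrow> 'a pred set \<Rightarrow> bool" where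
  "is_minterm P c \<longleftrightarrow> c \<subseteq> P \<union> negp ` P \<and> (\<forall>p\<in>P. (p \<in> c \<longleftrightarrow> negp p \<notin> c))"

definition valid_impl :: "('a \<Rightarrow> bool) set \<Rightarrow> 'a pred set \<Rightarrow> 'a pred set \<Rightarrow> bool" where
  "valid_impl Mods c E \<longleftrightarrow>
     (\<forall>M\<in>Mods. \<not> (\<forall>l\<in>c. sat_pred M l) \<or> (\<exists>e\<in>E. sat_pred M e))"

text \<open>Truth value of a literal of a Boolean combination of predicates of P,
  when each p \<in> P is assigned true iff p \<in> P'.\<close>
definition lit_val :: "'a pred set \<Rightarrow> 'a pred set \<Rightarrow> 'a pred \<Rightarrow> bool" where
  "lit_val P P' l = (if l \<in> P then l \<in> P' else \<not> (negp l \<in> P'))"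

definition F_val :: "('a \<Rightarrow> bool) set \<Rightarrow> 'a pred set \<Rightarrow> 'a pred set \<Rightarrow> 'a pred set \<Rightarrow> bool" where
  "F_val Mods P E P' \<longleftrightarrow>
     (\<exists>c. is_minterm P c \<and> valid_impl Mods c E \<and> (\<forall>l\<in>c. lit_val P P' l))"

end

theory Submission
  imports Defs
begin

text \<open>Under the assignment that makes exactly the predicates of \<open>G'\<close> true, the value of
  \<open>\<tau>(g,i)\<close> is just membership of \<open>g\<close> in the \<open>i\<close>-th saturation round started from
  \<open>G' \<union> \<not>E\<close>. Hence the value of \<open>\<tau>_e\<close> is the answer of \<open>Sat_N(G' \<union> \<not>E)\<close>, and since
  \<open>N = D_T(G \<union> \<not>E) \<ge> d_T(G' \<union> \<not>E)\<close> this answer decides unsatisfiability of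
  \<open>G' \<and> \<not>e\<close>, i.e. validity of \<open>\<not>G' \<or> e\<close>. For a minterm \<open>P'\<close> the only minterm true
  at \<open>P'\<close> is \<open>P'\<close> itself, so \<open>F_P(e)\<close> evaluated at \<open>P'\<close> is the same validity statement.\<close>

lemma negp_negp [simp]: "negp (negp l) = l"
  by (cases l) auto

lemma sat_pred_negp [simp]: "sat_pred M (negp l) \<longleftrightarrow> \<not> sat_pred M l"
  by (cases l) auto

lemma satW_mono: "A \<subseteq> B \<Longrightarrow> satW R A i \<subseteq> satW R B i"
  by (induction i) auto

lemma DT_ge:
  assumes "finite S" and "S' \<subseteq> S"
  shows "d S' \<le> DT d S"
  unfolding DT_def using assms by (intro Max_ge) auto

lemma sdp_val_iff_mem_satW:
  assumes "G' \<subseteq> G"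
  shows "sdp_val R G E i g G' \<longleftrightarrow> g \<in> satW R (G' \<union> negp ` E) i"
proof (induction i arbitrary: g)
  case 0
  then show ?case using assms by auto
next
  case (Suc i)
  have "satW R (G' \<union> negp ` E) i \<subseteq> satW R (G \<union> negp ` E) i"
    using assms by (intro satW_mono) auto
  then show ?case by (auto simp: Suc.IH)
qed

lemma SDP_val_iff_Sat_unsat:
  assumes "G' \<subseteq> G"
  shows "SDP_val R d G E G' \<longleftrightarrow> Sat_unsat R (DT d (G \<union> negp ` E)) (G' \<union> negp ` E)"
proof -
  let ?N = "DT d (G \<union> negp ` E)"
  have "satW R (G' \<union> negp ` E) ?N \<subseteq> satW R (G \<union> negp ` E) ?N"
    using assms by (intro satW_mono) auto
  then show ?thesis
    unfolding SDP_val_def Sat_unsat_def Let_def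
    using sdp_val_iff_mem_satW[OF assms] by blast
qed

lemma SDP_val_iff_unsatisfiable:
  assumes "bounded_saturation Mods R d" and "finite G" and "finite E" and "G' \<subseteq> G"
  shows "SDP_val R d G E G' \<longleftrightarrow> \<not> satisfiable Mods (G' \<union> negp ` E)"
proof -
  have "finite (G \<union> negp ` E)" and sub: "G' \<union> negp ` E \<subseteq> G \<union> negp ` E"
    using assms(2-4) by auto
  then have "finite (G' \<union> negp ` E)" and "d (G' \<union> negp ` E) \<le> DT d (G \<union> negp ` E)"
    by (auto intro: finite_subset DT_ge)
  then show ?thesis
    using assms(1) SDP_val_iff_Sat_unsat[OF assms(4)]
    unfolding bounded_saturation_def by blast
qed

lemma valid_impl_iff_unsatisfiable:
  "valid_impl Mods c E \<longleftrightarrow> \<not> satisfiable Mods (c \<union> negp ` E)"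
  unfolding valid_impl_def satisfiable_def ball_Un ball_simps(10) by simp

lemma valid_impl_antimono: "valid_impl Mods c E \<Longrightarrow> c \<subseteq> c' \<Longrightarrow> valid_impl Mods c' E"
  unfolding valid_impl_def by blast

lemma lit_val_minterm_iff_mem:
  assumes "is_minterm P P'" and "l \<in> P \<union> negp ` P"
  shows "lit_val P P' l \<longleftrightarrow> l \<in> P'"
  using assms unfolding is_minterm_def lit_val_def by auto

lemma F_val_minterm_iff_valid_impl:
  assumes "is_minterm P P'"
  shows "F_val Mods P E P' \<longleftrightarrow> valid_impl Mods P' E"
proof
  assume "F_val Mods P E P'"
  then obtain c where c: "is_minterm P c" "valid_impl Mods c E" "\<forall>l\<in>c. lit_val P P' l"
    unfolding F_val_def by blast
  have "c \<subseteq> P'"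
    using c(1,3) lit_val_minterm_iff_mem[OF assms] unfolding is_minterm_def by blast
  with c(2) show "valid_impl Mods P' E"
    by (rule valid_impl_antimono)
next
  have "\<forall>l\<in>P'. lit_val P P' l"
    using assms lit_val_minterm_iff_mem[OF assms] unfolding is_minterm_def by blast
  moreover assume "valid_impl Mods P' E"
  ultimately show "F_val Mods P E P'"
    unfolding F_val_def using assms by blast
qed

theorem corollary3p5:
  fixes Mods :: "('a \<Rightarrow> bool) set" and R :: "'a rules" and d :: "'a pred set \<Rightarrow> nat"
    and P E P' :: "'a pred set"
  assumes "bounded_saturation Mods R d"
    and "finite P" and "finite E"
    and "P' \<subseteq> P \<union> negp ` P"
    and "\<forall>p\<in>P. (p \<in> P' \<longleftrightarrow> negp p \<notin> P')"
  shows "SDP_val R d (P \<union> negp ` P) E P' = F_val Mods P E P'"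
proof -
  have minterm: "is_minterm P P'"
    using assms(4,5) unfolding is_minterm_def by blast
  have "SDP_val R d (P \<union> negp ` P) E P' \<longleftrightarrow> \<not> satisfiable Mods (P' \<union> negp ` E)"
    using assms(1-4) by (intro SDP_val_iff_unsatisfiable) auto
  also have "\<dots> \<longleftrightarrow> valid_impl Mods P' E"
    by (rule valid_impl_iff_unsatisfiable[symmetric])
  also have "\<dots> \<longleftrightarrow> F_val Mods P E P'"
    by (rule F_val_minterm_iff_valid_impl[OF minterm, symmetric])
  finally show ?thesis .
qed

end
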